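(* Let $G$ be a Polish group and let $H\colon G \to [0,\infty]$ be a graded subgroup. Then the following are equivalent: (1) $\inf_{x \in G} H^\circ(x) = 0$; (2) $H$ is continuous; (3) $H$ is upper semi-continuous.
   Context: A graded subgroup of $G$ is a function $H\colon G \to [0,\infty]$ such that $H(1_G) = 0$, $H(x) = H(x^{-1})$ for all $x$, and $H(hg) \leq H(h) + H(g)$ for all $g,h \in G$. The interior $H^\circ$ is the function $H^\circ(x) = \limsup_{y \to x} H(y)$. Here $[0,\infty]$ carries the order topology. *)

theory Defs
  imports "HOL-Analysis.Analysis" "HOL-Library.Extended_Nonnegative_Real"
begin

text \<open>Groups are written additively (class group_add is not assumed commutative):
  the paper's product h g corresponds to h + g, the identity to 0, inverses to uminus.\<close>

definition graded_subgroup :: "('a::group_add \<Rightarrow> ennreal) \<Rightarrow> bool" where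
  "graded_subgroup H \<longleftrightarrow>
     H 0 = 0 \<and> (\<forall>x. H x = H (- x)) \<and> (\<forall>g h. H (h + g) \<le> H h + H g)"

definition graded_interior :: "('a::topological_space \<Rightarrow> ennreal) \<Rightarrow> 'a \<Rightarrow> ennreal" where
  "graded_interior H x = Limsup (nhds x) H"

definition upper_semicontinuous :: "('a::topological_space \<Rightarrow> 'b::linorder) \<Rightarrow> bool" where
  "upper_semicontinuous H \<longleftrightarrow> (\<forall>r. open {x. H x < r})"

end

theory Submission
  imports Defs
begin

text \<open>Translating by \<open>x\<close> and using subadditivity and symmetry gives
  \<open>H\<degree>(0) \<le> 2 H\<degree>(x)\<close>, so \<open>inf H\<degree> = 0\<close> forces \<open>H\<degree>(0) = 0\<close>, i.e. \<open>H\<close> tends to \<open>0\<close> at the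
  identity. That alone gives continuity everywhere, by \<open>|H(y) - H(x)| \<le> H(x\<inverse>y)\<close>, used in
  its additive form so that it survives the value \<open>\<infinity>\<close>. Upper semicontinuity at the identity
  already gives the convergence to \<open>0\<close>, since \<open>H \<ge> 0 = H(1)\<close>.\<close>

lemma Limsup_filter_mono:
  assumes "F \<le> G"
  shows "Limsup F f \<le> Limsup G f"
  unfolding Limsup_def
  by (rule INF_superset_mono) (use assms in \<open>auto simp: le_filter_def\<close>)

lemma Limsup_nhds_ge: "f x \<le> Limsup (nhds x) f"
  by (rule Limsup_greatest) (auto simp: eventually_nhds intro: SUP_upper)

lemma tendsto_zero_iff_Limsup_eq_zero_ennreal:
  fixes f :: "'a \<Rightarrow> ennreal"
  assumes "F \<noteq> bot"
  shows "(f \<longlongrightarrow> 0) F \<longleftrightarrow> Limsup F f = 0"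
  using assms Liminf_le_Limsup[OF assms, of f] tendsto_iff_Liminf_eq_Limsup[of F f 0]
  by (auto simp: trivial_limit_def)

lemma INF_double_eq_zero_ennreal:
  fixes f :: "'a \<Rightarrow> ennreal"
  assumes "(INF x. f x) = 0"
  shows "(INF x. f x + f x) = 0"
proof -
  have "(\<lambda>t. t + t) (Inf (range f)) = Inf ((\<lambda>t. t + t) ` range f)"
    by (rule continuous_at_Inf_mono) (auto simp: mono_def add_mono intro: continuous_add continuous_ident)
  with assms show ?thesis by (simp add: image_image)
qed

lemma tendsto_additive_sandwich_ennreal:
  fixes f d :: "'a \<Rightarrow> ennreal"
  assumes d: "(d \<longlongrightarrow> 0) F"
    and upper: "eventually (\<lambda>y. f y \<le> c + d y) F"
    and lower: "eventually (\<lambda>y. c \<le> f y + d y) F"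
  shows "(f \<longlongrightarrow> c) F"
proof (rule order_tendstoI)
  fix u assume "c < u"
  moreover have "((\<lambda>y. c + d y) \<longlongrightarrow> c + 0) F"
    by (intro tendsto_intros d)
  ultimately have "eventually (\<lambda>y. c + d y < u) F"
    by (simp add: order_tendstoD(2))
  with upper show "eventually (\<lambda>y. f y < u) F"
    by eventually_elim (rule le_less_trans)
next
  fix l assume "l < c"
  moreover have "((\<lambda>y. l + d y) \<longlongrightarrow> l + 0) F"
    by (intro tendsto_intros d)
  ultimately have "eventually (\<lambda>y. l + d y < c) F"
    by (simp add: order_tendstoD(2))
  with lower show "eventually (\<lambda>y. l < f y) F"
  proof eventually_elim
    case (elim y)
    show "l < f y"
    proof (rule ccontr)
      assume "\<not> l < f y"
      then have "f y + d y \<le> l + d y" by (simp add: add_right_mono)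
      with elim(1) have "c \<le> l + d y" by (rule order_trans)
      with elim(2) show False by simp
    qed
  qed
qed

lemma upper_semicontinuous_if_continuous_on:
  fixes f :: "'a::topological_space \<Rightarrow> 'b::linorder_topology"
  assumes "continuous_on UNIV f"
  shows "upper_semicontinuous f"
  unfolding upper_semicontinuous_def
  using open_vimage[OF open_lessThan assms] by (simp add: vimage_def)

lemma upper_semicontinuous_imp_tendsto_zero_ennreal:
  fixes f :: "'a::topological_space \<Rightarrow> ennreal"
  assumes "upper_semicontinuous f" and "f x = 0"
  shows "(f \<longlongrightarrow> 0) (nhds x)"
proof (rule order_tendstoI)
  fix u :: ennreal assume "0 < u"
  then have "x \<in> {y. f y < u}" using assms(2) by simp
  moreover have "open {y. f y < u}" using assms(1) unfolding upper_semicontinuous_def by blast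
  ultimately show "eventually (\<lambda>y. f y < u) (nhds x)"
    unfolding eventually_nhds by blast
qed simp

lemma graded_subgroupD:
  assumes "graded_subgroup H"
  shows graded_subgroup_zero: "H 0 = 0"
    and graded_subgroup_uminus: "H (- x) = H x"
    and graded_subgroup_add_le: "H (h + g) \<le> H h + H g"
  using assms unfolding graded_subgroup_def by metis+

lemma graded_subgroup_le_add_translate:
  assumes "graded_subgroup H"
  shows "H y \<le> H x + H (- x + y)"
  using graded_subgroup_add_le[OF assms, of x "- x + y"] by simp

lemma graded_subgroup_le_add_translate_swap:
  assumes "graded_subgroup H"
  shows "H x \<le> H y + H (- x + y)"
  using graded_subgroup_le_add_translate[OF assms, where x = y and y = x]
    graded_subgroup_uminus[OF assms, of "- x + y"]
  by (simp add: minus_add)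

lemma graded_interior_eq_zero_iff:
  fixes H :: "'a::topological_space \<Rightarrow> ennreal"
  shows "graded_interior H x = 0 \<longleftrightarrow> (H \<longlongrightarrow> 0) (nhds x)"
  unfolding graded_interior_def
  by (rule tendsto_zero_iff_Limsup_eq_zero_ennreal[symmetric]) simp

lemma graded_interior_zero_le:
  fixes H :: "'a::topological_group_add \<Rightarrow> ennreal"
  assumes "graded_subgroup H"
  shows "graded_interior H 0 \<le> graded_interior H x + graded_interior H x"
proof -
  have shift: "filtermap (\<lambda>z. x + z) (nhds 0) \<le> nhds x"
    using tendsto_add[OF tendsto_const[of x] filterlim_ident[of "nhds 0"]]
    by (simp add: filterlim_def)
  have "Limsup (nhds 0) H \<le> Limsup (nhds 0) (\<lambda>z. H x + H (x + z))"
    using graded_subgroup_le_add_translate[OF assms, where x = "- x"]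
    by (intro Limsup_mono always_eventually allI) (simp add: graded_subgroup_uminus[OF assms])
  also have "\<dots> = H x + Limsup (nhds 0) (\<lambda>z. H (x + z))"
    by (simp add: Limsup_const_add)
  also have "\<dots> \<le> H x + Limsup (nhds x) H"
    using order_trans[OF Limsup_filtermap_ge[of "nhds 0" H "(+) x"] Limsup_filter_mono[OF shift]]
    by (rule add_left_mono)
  also have "\<dots> \<le> graded_interior H x + graded_interior H x"
    unfolding graded_interior_def by (intro add_right_mono Limsup_nhds_ge)
  finally show ?thesis unfolding graded_interior_def .
qed

lemma graded_subgroup_continuous_if_tendsto_zero:
  fixes H :: "'a::topological_group_add \<Rightarrow> ennreal"
  assumes "graded_subgroup H" and H0: "(H \<longlongrightarrow> 0) (nhds 0)"
  shows "continuous_on UNIV H"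
proof -
  have "(H \<longlongrightarrow> H x) (nhds x)" for x
  proof (rule tendsto_additive_sandwich_ennreal)
    have "((\<lambda>y. - x + y) \<longlongrightarrow> - x + x) (nhds x)"
      by (intro tendsto_intros filterlim_ident)
    then show "((\<lambda>y. H (- x + y)) \<longlongrightarrow> 0) (nhds x)"
      by (intro filterlim_compose[OF H0]) simp
    show "eventually (\<lambda>y. H y \<le> H x + H (- x + y)) (nhds x)"
      by (intro always_eventually allI graded_subgroup_le_add_translate[OF assms(1)])
    show "eventually (\<lambda>y. H x \<le> H y + H (- x + y)) (nhds x)"
      by (intro always_eventually allI graded_subgroup_le_add_translate_swap[OF assms(1)])
  qed
  then show ?thesis
    unfolding continuous_on_def at_within_def using tendsto_mono[OF inf_le1] by blast
qed

theorem lemma3p9: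
  fixes H :: "'a::{polish_space, topological_group_add} \<Rightarrow> ennreal"
  assumes "graded_subgroup H"
  shows "((INF x. graded_interior H x) = 0 \<longleftrightarrow> continuous_on UNIV H)
       \<and> (continuous_on UNIV H \<longleftrightarrow> upper_semicontinuous H)"
proof -
  let ?tendsto_zero = "(H \<longlongrightarrow> 0) (nhds 0)"
  have "?tendsto_zero \<longleftrightarrow> (INF x. graded_interior H x) = 0"
  proof
    assume ?tendsto_zero
    then have "graded_interior H 0 = 0" by (simp add: graded_interior_eq_zero_iff)
    then show "(INF x. graded_interior H x) = 0"
      using INF_lower[of 0 UNIV "graded_interior H"] by simp
  next
    assume "(INF x. graded_interior H x) = 0"
    then have "(INF x. graded_interior H x + graded_interior H x) = 0"
      by (rule INF_double_eq_zero_ennreal)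
    moreover have "graded_interior H 0 \<le> (INF x. graded_interior H x + graded_interior H x)"
      by (rule INF_greatest) (rule graded_interior_zero_le[OF assms])
    ultimately show ?tendsto_zero
      by (simp flip: graded_interior_eq_zero_iff)
  qed
  moreover have "continuous_on UNIV H \<Longrightarrow> upper_semicontinuous H"
    by (rule upper_semicontinuous_if_continuous_on)
  moreover have "upper_semicontinuous H \<Longrightarrow> ?tendsto_zero"
    using upper_semicontinuous_imp_tendsto_zero_ennreal graded_subgroup_zero[OF assms] by blast
  moreover have "?tendsto_zero \<Longrightarrow> continuous_on UNIV H"
    by (rule graded_subgroup_continuous_if_tendsto_zero[OF assms])
  ultimately show ?thesis by blast
qed

end
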